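(* Let $\Gamma$ be a weighted digraph with vertex set $\{1,\dots,n\}$, $n>1$, without loops and with strictly positive arc weights, with Laplacian matrix $L$, matrices of in-forests $Q_k$ and in-forest weights $\sigma_k$. Then for every $k=0,1,2,\dots$, $$Q_{k+1}=(-L)Q_k+\sigma_{k+1}I,\qquad \sigma_{k+1}=\frac{\operatorname{tr}(LQ_k)}{k+1}.$$
   Context: $W=(w_{ij})$ is the matrix of arc weights ($w_{ij}>0$ iff there is an arc $i\to j$, else $0$). The Laplacian $L=(\ell_{ij})$: $\ell_{ij}=-w_{ij}$ for $j\ne i$, $\ell_{ii}=\sum_{k\ne i}w_{ik}$. The weight of a subgraph is the product of its arc weights (1 if no arcs); the weight of a set of subgraphs is the sum of their weights (0 for the empty set). A converging tree is a weakly connected digraph with one vertex (the root) of outdegree 0 and all others of outdegree 1; an in-forest is a spanning subgraph of $\Gamma$ whose weak components are converging trees. $\sigma_k$ is the total weight of in-forests of $\Gamma$ with $k$ arcs ($\sigma_0=1$, and $\sigma_k=0$ when no such in-forest exists). $Q_k=(q^k_{ij})$ where $q^k_{ij}$ is the total weight of in-forests with $k$ arcs in which $i$ lies in a tree rooted at $j$ ($Q_0=I$, and $Q_k=0$ when no in-forest with $k$ arcs exists). *)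

theory Defs
  imports "HOL-Analysis.Analysis"
begin

text \<open>Weighted digraph on the finite vertex type 'n, given by its weight matrix W.
  Arcs are the pairs (i,j) with W i j nonzero.\<close>

definition arcs :: "real^'n^'n \<Rightarrow> ('n \<times> 'n) set" where
  "arcs W = {(i,j). W $ i $ j \<noteq> 0}"

definition laplacian :: "real^'n^'n \<Rightarrow> real^'n^'n" where
  "laplacian W = (\<chi> i j. if i = j then (\<Sum>k\<in>UNIV - {i}. W $ i $ k) else - W $ i $ j)"

definition sg_weight :: "real^'n^'n \<Rightarrow> ('n \<times> 'n) set \<Rightarrow> real" where
  "sg_weight W F = (\<Prod>(i,j)\<in>F. W $ i $ j)"

definition outdeg :: "('n \<times> 'n) set \<Rightarrow> 'n \<Rightarrow> nat" where
  "outdeg F v = card {j. (v,j) \<in> F}"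

definition weak_comp :: "('n \<times> 'n) set \<Rightarrow> 'n \<Rightarrow> 'n set" where
  "weak_comp F i = (F \<union> F\<inverse>)\<^sup>* `` {i}"

definition converging_tree :: "('n \<times> 'n) set \<Rightarrow> 'n set \<Rightarrow> bool" where
  "converging_tree F C \<longleftrightarrow>
     (\<exists>!r. r \<in> C \<and> outdeg F r = 0) \<and> (\<forall>v\<in>C. outdeg F v \<le> 1)"

definition in_forest :: "real^'n^'n \<Rightarrow> ('n \<times> 'n) set \<Rightarrow> bool" where
  "in_forest W F \<longleftrightarrow> F \<subseteq> arcs W \<and> (\<forall>i. converging_tree F (weak_comp F i))"

definition sigma :: "real^'n^'n \<Rightarrow> nat \<Rightarrow> real" where
  "sigma W k = (\<Sum>F\<in>{F. in_forest W F \<and> card F = k}. sg_weight W F)"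

text \<open>Q k: entry (i,j) is the total weight of in-forests with k arcs in which
  i lies in a tree rooted at j.\<close>
definition Qmat :: "real^'n^'n \<Rightarrow> nat \<Rightarrow> real^'n^'n" where
  "Qmat W k = (\<chi> i j. \<Sum>F\<in>{F. in_forest W F \<and> card F = k \<and>
                               j \<in> weak_comp F i \<and> outdeg F j = 0}. sg_weight W F)"

end

theory Submission
  imports Defs
begin

text \<open>An in-forest is a functional arc relation in which every vertex reaches a sink, its root.
  Entry \<open>(i, j)\<close> of \<open>Q\<^sub>k\<^sub>+\<^sub>1 - \<sigma>\<^sub>k\<^sub>+\<^sub>1 I\<close> weighs each forest with \<open>k + 1\<close> arcs by
  \<open>[root of i = j] - \<delta>\<^sub>i\<^sub>j\<close>, which vanishes when \<open>i\<close> is a root. Removing the arc \<open>i \<rightarrow> p\<close>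
  leaving \<open>i\<close> gives a forest \<open>G\<close> with \<open>k\<close> arcs in which \<open>i\<close> is a root and \<open>p\<close> is outside the
  tree of \<open>i\<close>, and \<open>w\<^sub>i\<^sub>p\<close> times the weight of \<open>G\<close> times \<open>[root of p = j] - \<delta>\<^sub>i\<^sub>j\<close> is exactly
  the contribution of \<open>G\<close> to \<open>((-L) Q\<^sub>k)\<^sub>i\<^sub>j = \<Sum>\<^sub>m w\<^sub>i\<^sub>m (Q\<^sub>k(m, j) - Q\<^sub>k(i, j))\<close>. The forests
  in which \<open>i\<close> is not a root contribute nothing to the latter sum: removing their arc
  \<open>i \<rightarrow> p\<close> as well turns their total into a sum antisymmetric in \<open>(p, m)\<close>. The trace
  formula follows because a forest with \<open>k\<close> arcs has \<open>n - k\<close> roots, so \<open>tr Q\<^sub>k = (n - k) \<sigma>\<^sub>k\<close>.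
  None of the hypotheses of the theorem is needed: in-forests contain no loops, and
  \<open>w\<^sub>i\<^sub>i\<close> cancels in the Laplacian.\<close>

section \<open>Rooted forests as functional relations\<close>

definition rooted_forest :: "('a \<times> 'a) set \<Rightarrow> bool" where
  "rooted_forest F \<longleftrightarrow> single_valued F \<and> (\<forall>v. \<exists>r. (v, r) \<in> F\<^sup>* \<and> r \<notin> Domain F)"

definition forest_root :: "('a \<times> 'a) set \<Rightarrow> 'a \<Rightarrow> 'a" where
  "forest_root F v = (THE r. (v, r) \<in> F\<^sup>* \<and> r \<notin> Domain F)"

lemma single_valued_sink_unique:
  assumes sv: "single_valued F" and "(v, r1) \<in> F\<^sup>*" "(v, r2) \<in> F\<^sup>*"
    and sink1: "r1 \<notin> Domain F" and sink2: "r2 \<notin> Domain F"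
  shows "r1 = r2"
  using assms(2,3)
proof (induction v rule: converse_rtrancl_induct)
  case base
  then show ?case using sink1 by (metis DomainI converse_rtranclE)
next
  case (step v y)
  show ?case
  proof (cases "v = r2")
    case True
    then show ?thesis using step.hyps(1) sink2 by blast
  next
    case False
    then obtain z where "(v, z) \<in> F" "(z, r2) \<in> F\<^sup>*"
      using step.prems by (metis converse_rtranclE)
    with step.hyps(1) sv have "z = y" by (auto dest: single_valuedD)
    then show ?thesis using step.IH \<open>(z, r2) \<in> F\<^sup>*\<close> by simp
  qed
qed

lemma forest_root_eqI:
  "single_valued F \<Longrightarrow> (v, r) \<in> F\<^sup>* \<Longrightarrow> r \<notin> Domain F \<Longrightarrow> forest_root F v = r"
  unfolding forest_root_def by (rule the_equality) (auto intro: single_valued_sink_unique)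

lemma forest_root:
  "rooted_forest F \<Longrightarrow> (v, forest_root F v) \<in> F\<^sup>* \<and> forest_root F v \<notin> Domain F"
  unfolding rooted_forest_def by (metis forest_root_eqI)

lemma forest_root_sink: "rooted_forest F \<Longrightarrow> v \<notin> Domain F \<Longrightarrow> forest_root F v = v"
  unfolding rooted_forest_def by (metis forest_root_eqI rtrancl.rtrancl_refl)

lemma forest_root_eq_self_iff: "rooted_forest F \<Longrightarrow> forest_root F v = v \<longleftrightarrow> v \<notin> Domain F"
  using forest_root forest_root_sink by metis

lemma forest_root_arc: "rooted_forest F \<Longrightarrow> (u, w) \<in> F \<Longrightarrow> forest_root F u = forest_root F w"
  by (metis converse_rtrancl_into_rtrancl rooted_forest_def forest_root forest_root_eqI)

lemma forest_root_weak_comp: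
  assumes "rooted_forest F" and "(u, w) \<in> (F \<union> F\<inverse>)\<^sup>*"
  shows "forest_root F u = forest_root F w"
  using assms(2)
  by (induction rule: rtrancl_induct) (auto simp: forest_root_arc[OF assms(1)])

lemma single_valued_sink_reachable:
  assumes sv: "single_valued F" and sink: "r \<notin> Domain F" and "(r, u) \<in> (F \<union> F\<inverse>)\<^sup>*"
  shows "(u, r) \<in> F\<^sup>*"
  using assms(3)
proof (induction rule: rtrancl_induct)
  case base
  then show ?case by simp
next
  case (step u w)
  show ?case
  proof (cases "(u, w) \<in> F")
    case True
    then have "u \<noteq> r" using sink by blast
    then obtain y where "(u, y) \<in> F" "(y, r) \<in> F\<^sup>*"
      using step.IH by (metis converse_rtranclE)
    with True sv have "y = w" by (auto dest: single_valuedD)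
    then show ?thesis using \<open>(y, r) \<in> F\<^sup>*\<close> by simp
  next
    case False
    then have "(w, u) \<in> F" using step.hyps by auto
    then show ?thesis using step.IH by (meson converse_rtrancl_into_rtrancl)
  qed
qed

lemma single_valued_reaches_sink_acyclic:
  assumes sv: "single_valued F" and "(x, r) \<in> F\<^sup>*" and sink: "r \<notin> Domain F"
  shows "(x, x) \<notin> F\<^sup>+"
  using assms(2)
proof (induction x rule: converse_rtrancl_induct)
  case base
  then show ?case using sink by (auto dest: tranclD)
next
  case (step x y)
  show ?case
  proof
    assume "(x, x) \<in> F\<^sup>+"
    then obtain z where z: "(x, z) \<in> F" "(z, x) \<in> F\<^sup>*" by (meson tranclD)
    with step.hyps(1) sv have "z = y" by (auto dest: single_valuedD)
    then have "(y, y) \<in> F\<^sup>+" using z step.hyps(1) by (meson rtrancl_into_trancl1)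
    then show False using step.IH by blast
  qed
qed

lemma rooted_forest_insert:
  assumes G: "rooted_forest G" and i: "i \<notin> Domain G" and p: "forest_root G p \<noteq> i"
  shows "rooted_forest (insert (i, p) G)"
    and "forest_root (insert (i, p) G) v =
           (if forest_root G v = i then forest_root G p else forest_root G v)"
proof -
  let ?G = "insert (i, p) G"
  have sv: "single_valued ?G" using G i unfolding rooted_forest_def single_valued_def by blast
  have sub: "G\<^sup>* \<subseteq> ?G\<^sup>*" by (rule rtrancl_mono) blast
  have root_new: "(v, if forest_root G v = i then forest_root G p else forest_root G v) \<in> ?G\<^sup>* \<and>
        (if forest_root G v = i then forest_root G p else forest_root G v) \<notin> Domain ?G" for v
  proof (cases "forest_root G v = i")
    case True
    have "(v, i) \<in> ?G\<^sup>*" using forest_root[OF G, of v] True sub by auto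
    moreover have "(p, forest_root G p) \<in> ?G\<^sup>*" using forest_root[OF G, of p] sub by auto
    ultimately have "(v, forest_root G p) \<in> ?G\<^sup>*"
      by (meson insertI1 rtrancl_into_rtrancl rtrancl_trans)
    moreover have "forest_root G p \<notin> Domain ?G" using forest_root[OF G, of p] p by auto
    ultimately show ?thesis using True by simp
  next
    case False
    then show ?thesis using forest_root[OF G, of v] sub by auto
  qed
  show "rooted_forest ?G" unfolding rooted_forest_def using sv root_new by blast
  show "forest_root ?G v = (if forest_root G v = i then forest_root G p else forest_root G v)"
    using forest_root_eqI[OF sv] root_new by blast
qed

lemma rooted_forest_remove:
  assumes F: "rooted_forest F" and ip: "(i, p) \<in> F"
  shows "rooted_forest (F - {(i, p)})" and "i \<notin> Domain (F - {(i, p)})"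
    and "forest_root (F - {(i, p)}) p \<noteq> i"
proof -
  let ?G = "F - {(i, p)}"
  have sv: "single_valued F" using F rooted_forest_def by blast
  then have svG: "single_valued ?G" unfolding single_valued_def by blast
  show i: "i \<notin> Domain ?G" using sv ip by (auto dest: single_valuedD)
  have "\<exists>r'. (v, r') \<in> ?G\<^sup>* \<and> r' \<notin> Domain ?G" if "(v, r) \<in> F\<^sup>*" "r \<notin> Domain F" for v r
    using that(1)
  proof (induction v rule: converse_rtrancl_induct)
    case base
    then show ?case using that(2) by blast
  next
    case (step v w)
    show ?case
    proof (cases "(v, w) = (i, p)")
      case True
      then show ?thesis using i by blast
    next
      case False
      then have "(v, w) \<in> ?G" using step.hyps by blast
      then show ?thesis using step.IH by (meson converse_rtrancl_into_rtrancl)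
    qed
  qed
  then show G: "rooted_forest ?G" using svG forest_root[OF F] unfolding rooted_forest_def by blast
  show "forest_root ?G p \<noteq> i"
  proof
    assume "forest_root ?G p = i"
    then have "(p, i) \<in> ?G\<^sup>*" using forest_root[OF G, of p] by simp
    then have "(p, i) \<in> F\<^sup>*" by (meson Diff_subset rtrancl_mono subsetD)
    then have "(i, i) \<in> F\<^sup>+" using ip by (meson rtrancl_into_trancl2)
    then show False using single_valued_reaches_sink_acyclic[OF sv] forest_root[OF F, of i] by blast
  qed
qed

lemma card_forest_roots:
  fixes F :: "('n::finite \<times> 'n) set"
  assumes F: "rooted_forest F"
  shows "card {v. forest_root F v = v} + card F = CARD('n)"
proof -
  have "{v. forest_root F v = v} = UNIV - Domain F"
    using forest_root_eq_self_iff[OF F] by blast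
  moreover have "inj_on fst F"
    using F unfolding rooted_forest_def inj_on_def by (auto dest: single_valuedD)
  then have "card (Domain F) = card F" by (simp add: Domain_fst card_image)
  ultimately show ?thesis
    using card_Diff_subset[of "Domain F" UNIV] card_mono[of UNIV "Domain F"] by simp
qed

section \<open>In-forests of a weighted digraph\<close>

lemma outdeg_eq_0_iff: "outdeg F v = 0 \<longleftrightarrow> v \<notin> Domain F" for F :: "('n::finite \<times> 'n) set"
  unfolding outdeg_def by auto

lemma single_valued_iff_outdeg_le_1:
  "single_valued F \<longleftrightarrow> (\<forall>v. outdeg F v \<le> 1)" for F :: "('n::finite \<times> 'n) set"
  unfolding outdeg_def single_valued_def One_nat_def card_le_Suc0_iff_eq[OF finite] by blast

lemma weak_comp_sym: "u \<in> weak_comp F v \<longleftrightarrow> v \<in> weak_comp F u"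
proof -
  have "sym ((F \<union> F\<inverse>)\<^sup>*)" by (intro sym_rtrancl sym_Un_converse)
  then show ?thesis unfolding weak_comp_def Image_singleton_iff by (blast dest: symD)
qed

lemma forest_root_in_weak_comp: "rooted_forest F \<Longrightarrow> forest_root F v \<in> weak_comp F v"
proof -
  assume "rooted_forest F"
  then have "(v, forest_root F v) \<in> F\<^sup>*" by (simp add: forest_root)
  then have "(v, forest_root F v) \<in> (F \<union> F\<inverse>)\<^sup>*" by (rule in_rtrancl_UnI[OF disjI1])
  then show ?thesis by (simp add: weak_comp_def)
qed

lemma forest_root_eq_iff_weak_comp:
  fixes F :: "('n::finite \<times> 'n) set"
  assumes F: "rooted_forest F"
  shows "forest_root F i = j \<longleftrightarrow> j \<in> weak_comp F i \<and> outdeg F j = 0"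
proof
  assume root: "forest_root F i = j"
  have "j \<in> weak_comp F i" using forest_root_in_weak_comp[OF F, of i] root by simp
  moreover have "outdeg F j = 0" using forest_root[OF F, of i] root by (simp add: outdeg_eq_0_iff)
  ultimately show "j \<in> weak_comp F i \<and> outdeg F j = 0" ..
next
  assume j: "j \<in> weak_comp F i \<and> outdeg F j = 0"
  then have "(i, j) \<in> (F \<union> F\<inverse>)\<^sup>*" by (simp add: weak_comp_def)
  then have "forest_root F i = forest_root F j" by (rule forest_root_weak_comp[OF F])
  also have "\<dots> = j" using j by (simp add: outdeg_eq_0_iff forest_root_sink[OF F])
  finally show "forest_root F i = j" .
qed

lemma in_forest_iff_rooted_forest: "in_forest W F \<longleftrightarrow> F \<subseteq> arcs W \<and> rooted_forest F"
proof
  assume H: "in_forest W F"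
  then have tree: "converging_tree F (weak_comp F v)" for v by (simp add: in_forest_def)
  have self: "v \<in> weak_comp F v" for v by (simp add: weak_comp_def)
  have "outdeg F v \<le> 1" for v
    using tree[of v] self[of v] unfolding converging_tree_def by blast
  then have sv: "single_valued F" by (simp add: single_valued_iff_outdeg_le_1)
  have "\<exists>r. (v, r) \<in> F\<^sup>* \<and> r \<notin> Domain F" for v
  proof -
    from tree[of v] obtain r where "r \<in> weak_comp F v" and r: "r \<notin> Domain F"
      unfolding converging_tree_def outdeg_eq_0_iff by (blast dest: ex1_implies_ex)
    then have "v \<in> weak_comp F r" by (simp only: weak_comp_sym)
    then have "(r, v) \<in> (F \<union> F\<inverse>)\<^sup>*" by (simp add: weak_comp_def)
    then show ?thesis using single_valued_sink_reachable[OF sv r] r by blast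
  qed
  with sv have "rooted_forest F" by (simp add: rooted_forest_def)
  with H show "F \<subseteq> arcs W \<and> rooted_forest F" by (simp add: in_forest_def)
next
  assume H: "F \<subseteq> arcs W \<and> rooted_forest F"
  then have F: "rooted_forest F" ..
  have "converging_tree F (weak_comp F i)" for i
  proof -
    have "\<exists>!r. r \<in> weak_comp F i \<and> outdeg F r = 0"
    proof (rule ex1I)
      show "forest_root F i \<in> weak_comp F i \<and> outdeg F (forest_root F i) = 0"
        using forest_root_eq_iff_weak_comp[OF F, of i "forest_root F i"] by simp
      show "r = forest_root F i" if "r \<in> weak_comp F i \<and> outdeg F r = 0" for r
        using forest_root_eq_iff_weak_comp[OF F, of i r] that by simp
    qed
    moreover have "single_valued F" using F by (simp add: rooted_forest_def)
    ultimately show ?thesis by (simp add: converging_tree_def single_valued_iff_outdeg_le_1)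
  qed
  with H show "in_forest W F" by (simp add: in_forest_def)
qed

definition forests :: "real^'n^'n \<Rightarrow> nat \<Rightarrow> ('n \<times> 'n) set set" where
  "forests W k = {F. F \<subseteq> arcs W \<and> rooted_forest F \<and> card F = k}"

lemma sigma_eq_sum_forests: "sigma W k = (\<Sum>F\<in>forests W k. sg_weight W F)"
  unfolding sigma_def forests_def by (simp add: in_forest_iff_rooted_forest conj_assoc)

lemma Qmat_eq_sum_forests:
  "Qmat W k $ i $ j = (\<Sum>F\<in>forests W k. of_bool (forest_root F i = j) * sg_weight W F)"
proof -
  have "{F. in_forest W F \<and> card F = k \<and> j \<in> weak_comp F i \<and> outdeg F j = 0}
      = forests W k \<inter> {F. j \<in> weak_comp F i \<and> outdeg F j = 0}"
    by (auto simp: forests_def in_forest_iff_rooted_forest)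
  then have "Qmat W k $ i $ j =
      (\<Sum>F\<in>forests W k. of_bool (j \<in> weak_comp F i \<and> outdeg F j = 0) * sg_weight W F)"
    unfolding Qmat_def by (simp add: sum.inter_restrict)
  also have "\<dots> = (\<Sum>F\<in>forests W k. of_bool (forest_root F i = j) * sg_weight W F)"
    by (rule sum.cong) (simp_all add: forests_def forest_root_eq_iff_weak_comp)
  finally show ?thesis .
qed

definition attachable :: "real^'n^'n \<Rightarrow> ('n \<times> 'n) set \<Rightarrow> 'n \<Rightarrow> 'n set" where
  "attachable W G i = {p. (i, p) \<in> arcs W \<and> forest_root G p \<noteq> i}"

lemma sum_forests_Suc_remove_arc:
  fixes W :: "real^'n^'n" and h :: "('n \<times> 'n) set \<Rightarrow> 'b::comm_monoid_add"
  shows "(\<Sum>F\<in>{F\<in>forests W (Suc k). i \<in> Domain F}. h F) =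
    (\<Sum>G\<in>{G\<in>forests W k. i \<notin> Domain G}. \<Sum>p\<in>attachable W G i. h (insert (i, p) G))"
proof -
  define parent where "parent F = (THE p. (i, p) \<in> F)" for F :: "('n \<times> 'n) set"
  have parent: "(i, parent F) \<in> F" if "rooted_forest F" "i \<in> Domain F" for F
  proof -
    have "\<exists>!p. (i, p) \<in> F" using that unfolding rooted_forest_def single_valued_def by blast
    then show ?thesis unfolding parent_def by (rule theI')
  qed
  let ?S = "Sigma {G\<in>forests W k. i \<notin> Domain G} (\<lambda>G. attachable W G i)"
  let ?T = "{F\<in>forests W (Suc k). i \<in> Domain F}"
  have "(\<Sum>Gp\<in>?S. h (insert (i, snd Gp) (fst Gp))) = (\<Sum>F\<in>?T. h F)"
  proof (rule sum.reindex_bij_witness[where i = "\<lambda>F. (F - {(i, parent F)}, parent F)"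
        and j = "\<lambda>Gp. insert (i, snd Gp) (fst Gp)"])
    fix Gp assume "Gp \<in> ?S"
    then obtain G p where Gp: "Gp = (G, p)" and G: "G \<in> forests W k" "i \<notin> Domain G"
      and p: "(i, p) \<in> arcs W" "forest_root G p \<noteq> i"
      by (cases Gp) (auto simp: attachable_def)
    have new: "(i, p) \<notin> G" using G(2) by blast
    have "parent (insert (i, p) G) = p"
      unfolding parent_def by (rule the_equality) (use G(2) in auto)
    then show "(insert (i, snd Gp) (fst Gp) - {(i, parent (insert (i, snd Gp) (fst Gp)))},
        parent (insert (i, snd Gp) (fst Gp))) = Gp"
      using Gp new by simp
    have "rooted_forest (insert (i, p) G)"
      using rooted_forest_insert(1)[OF _ G(2) p(2)] G(1) by (simp add: forests_def)
    then show "insert (i, snd Gp) (fst Gp) \<in> ?T"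
      using Gp G(1) p(1) new by (simp add: forests_def)
  next
    fix F assume "F \<in> ?T"
    then have F: "rooted_forest F" "i \<in> Domain F" "F \<subseteq> arcs W" "card F = Suc k"
      by (auto simp: forests_def)
    note arc = parent[OF F(1,2)]
    show "insert (i, snd (F - {(i, parent F)}, parent F)) (fst (F - {(i, parent F)}, parent F)) = F"
      using arc by auto
    show "(F - {(i, parent F)}, parent F) \<in> ?S"
      using rooted_forest_remove[OF F(1) arc] arc F(3,4) by (auto simp: forests_def attachable_def)
  qed simp
  then show ?thesis by (simp add: sum.Sigma split_def)
qed

lemma sg_weight_insert:
  fixes W :: "real^'n^'n"
  shows "(i, p) \<notin> G \<Longrightarrow> sg_weight W (insert (i, p) G) = W $ i $ p * sg_weight W G"
  unfolding sg_weight_def by simp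

lemma sum_sum_antisym_eq_0:
  fixes a x :: "'a \<Rightarrow> 'b::comm_ring"
  shows "(\<Sum>p\<in>P. \<Sum>m\<in>P. a p * a m * (x m - x p)) = 0"
proof -
  have "(\<Sum>p\<in>P. \<Sum>m\<in>P. a p * a m * x m) = (\<Sum>m\<in>P. \<Sum>p\<in>P. a p * a m * x m)"
    by (rule sum.swap)
  also have "\<dots> = (\<Sum>p\<in>P. \<Sum>m\<in>P. a p * a m * x p)"
    by (simp add: mult.commute mult.left_commute)
  finally show ?thesis by (simp add: right_diff_distrib sum_subtractf)
qed

lemma sum_row_restrict_attachable:
  fixes W :: "real^'n^'n"
  assumes "\<And>m. forest_root G m = i \<Longrightarrow> x m = c"
  shows "(\<Sum>m\<in>UNIV. W $ i $ m * (x m - c)) = (\<Sum>m\<in>attachable W G i. W $ i $ m * (x m - c))"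
  by (rule sum.mono_neutral_right) (auto simp: attachable_def arcs_def assms)

section \<open>The recurrence for the forest matrices\<close>

lemma Qmat_Suc_minus_sigma:
  fixes W :: "real^'n^'n"
  shows "Qmat W (Suc k) $ i $ j - of_bool (i = j) * sigma W (Suc k) =
    (\<Sum>G\<in>{G\<in>forests W k. i \<notin> Domain G}. sg_weight W G *
       (\<Sum>p\<in>attachable W G i. W $ i $ p * (of_bool (forest_root G p = j) - of_bool (i = j))))"
proof -
  define d where "d F = sg_weight W F * (of_bool (forest_root F i = j) - of_bool (i = j))" for F
  have "Qmat W (Suc k) $ i $ j - of_bool (i = j) * sigma W (Suc k) = (\<Sum>F\<in>forests W (Suc k). d F)"
    by (simp add: d_def Qmat_eq_sum_forests sigma_eq_sum_forests right_diff_distrib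
        sum_subtractf sum_distrib_left mult_ac)
  also have "\<dots> = (\<Sum>F\<in>{F\<in>forests W (Suc k). i \<in> Domain F}. d F)"
    by (rule sum.mono_neutral_right) (auto simp: d_def forests_def forest_root_sink)
  also have "\<dots> = (\<Sum>G\<in>{G\<in>forests W k. i \<notin> Domain G}. \<Sum>p\<in>attachable W G i. d (insert (i, p) G))"
    by (rule sum_forests_Suc_remove_arc)
  also have "\<dots> = (\<Sum>G\<in>{G\<in>forests W k. i \<notin> Domain G}. sg_weight W G *
       (\<Sum>p\<in>attachable W G i. W $ i $ p * (of_bool (forest_root G p = j) - of_bool (i = j))))"
  proof (rule sum.cong[OF refl])
    fix G assume "G \<in> {G\<in>forests W k. i \<notin> Domain G}"
    then have G: "rooted_forest G" "i \<notin> Domain G" by (auto simp: forests_def)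
    have "d (insert (i, p) G) =
        W $ i $ p * sg_weight W G * (of_bool (forest_root G p = j) - of_bool (i = j))"
      if "p \<in> attachable W G i" for p
    proof -
      have "forest_root (insert (i, p) G) i = forest_root G p"
        using rooted_forest_insert(2)[OF G] that forest_root_sink[OF G]
        by (simp add: attachable_def)
      moreover have "(i, p) \<notin> G" using G(2) by blast
      ultimately show ?thesis by (simp add: d_def sg_weight_insert)
    qed
    then show "(\<Sum>p\<in>attachable W G i. d (insert (i, p) G)) = sg_weight W G *
       (\<Sum>p\<in>attachable W G i. W $ i $ p * (of_bool (forest_root G p = j) - of_bool (i = j)))"
      by (simp add: sum_distrib_left mult_ac)
  qed
  finally show ?thesis .
qed

lemma sum_row_differences_insert_arc:
  fixes W :: "real^'n^'n" and j :: 'n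
  assumes G: "rooted_forest G" "i \<notin> Domain G" and p: "p \<in> attachable W G i"
  defines "x \<equiv> \<lambda>F m. of_bool (forest_root F m = j)"
  shows "(\<Sum>m\<in>UNIV. W $ i $ m * (x (insert (i, p) G) m - x (insert (i, p) G) i)) =
    (\<Sum>m\<in>attachable W G i. W $ i $ m * (x G m - x G p))"
proof -
  have root: "forest_root (insert (i, p) G) m =
      (if forest_root G m = i then forest_root G p else forest_root G m)" for m
    using rooted_forest_insert(2)[OF G] p by (simp add: attachable_def)
  then have "x (insert (i, p) G) i = x G p"
    using forest_root_sink[OF G] by (simp add: x_def)
  moreover have "(\<Sum>m\<in>UNIV. W $ i $ m * (x (insert (i, p) G) m - x G p)) =
      (\<Sum>m\<in>attachable W G i. W $ i $ m * (x (insert (i, p) G) m - x G p))"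
    by (rule sum_row_restrict_attachable) (simp add: x_def root)
  moreover have "x (insert (i, p) G) m = x G m" if "m \<in> attachable W G i" for m
    using that root by (simp add: x_def attachable_def)
  ultimately show ?thesis by simp
qed

lemma sum_forests_not_root_row_differences_eq_0:
  fixes W :: "real^'n^'n" and j :: 'n
  defines "x \<equiv> \<lambda>F m. of_bool (forest_root F m = j)"
  shows "(\<Sum>G\<in>{G\<in>forests W k. i \<in> Domain G}.
      sg_weight W G * (\<Sum>m\<in>UNIV. W $ i $ m * (x G m - x G i))) = 0"
proof (cases k)
  case 0
  then have no_forests: "{G\<in>forests W k. i \<in> Domain G} = {}" by (auto simp: forests_def)
  show ?thesis unfolding no_forests by simp
next
  case (Suc k')
  have "(\<Sum>G\<in>{G\<in>forests W (Suc k'). i \<in> Domain G}.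
      sg_weight W G * (\<Sum>m\<in>UNIV. W $ i $ m * (x G m - x G i))) =
    (\<Sum>G\<in>{G\<in>forests W k'. i \<notin> Domain G}. \<Sum>p\<in>attachable W G i.
      sg_weight W (insert (i, p) G) *
        (\<Sum>m\<in>UNIV. W $ i $ m * (x (insert (i, p) G) m - x (insert (i, p) G) i)))"
    by (rule sum_forests_Suc_remove_arc)
  also have "\<dots> = (\<Sum>G\<in>{G\<in>forests W k'. i \<notin> Domain G}. sg_weight W G *
      (\<Sum>p\<in>attachable W G i. \<Sum>m\<in>attachable W G i. W $ i $ p * W $ i $ m * (x G m - x G p)))"
  proof (rule sum.cong[OF refl])
    fix G assume "G \<in> {G\<in>forests W k'. i \<notin> Domain G}"
    then have G: "rooted_forest G" "i \<notin> Domain G" by (auto simp: forests_def)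
    have "sg_weight W (insert (i, p) G) *
        (\<Sum>m\<in>UNIV. W $ i $ m * (x (insert (i, p) G) m - x (insert (i, p) G) i)) =
      sg_weight W G * (\<Sum>m\<in>attachable W G i. W $ i $ p * W $ i $ m * (x G m - x G p))"
      if "p \<in> attachable W G i" for p
    proof -
      have "(i, p) \<notin> G" using G(2) by blast
      then show ?thesis
        using sum_row_differences_insert_arc[OF G that, of j]
        by (simp add: x_def sg_weight_insert sum_distrib_left mult_ac)
    qed
    then show "(\<Sum>p\<in>attachable W G i. sg_weight W (insert (i, p) G) *
        (\<Sum>m\<in>UNIV. W $ i $ m * (x (insert (i, p) G) m - x (insert (i, p) G) i))) =
      sg_weight W G * (\<Sum>p\<in>attachable W G i. \<Sum>m\<in>attachable W G i.
        W $ i $ p * W $ i $ m * (x G m - x G p))"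
      by (simp add: sum_distrib_left)
  qed
  also have "\<dots> = 0" by (simp add: sum_sum_antisym_eq_0)
  finally show ?thesis using Suc by simp
qed

lemma Qmat_Suc_entry:
  fixes W :: "real^'n^'n"
  shows "Qmat W (Suc k) $ i $ j - of_bool (i = j) * sigma W (Suc k) =
    (\<Sum>m\<in>UNIV. W $ i $ m * (Qmat W k $ m $ j - Qmat W k $ i $ j))"
proof -
  define x where "x F m = (of_bool (forest_root F m = j) :: real)" for F m
  define \<psi> where "\<psi> G = (\<Sum>m\<in>UNIV. W $ i $ m * (x G m - x G i))" for G
  have diff: "Qmat W k $ m $ j - Qmat W k $ i $ j =
      (\<Sum>G\<in>forests W k. sg_weight W G * (x G m - x G i))" for m
    unfolding Qmat_eq_sum_forests x_def sum_subtractf[symmetric]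
    by (rule sum.cong) (simp_all add: algebra_simps)
  have "(\<Sum>m\<in>UNIV. W $ i $ m * (Qmat W k $ m $ j - Qmat W k $ i $ j)) =
      (\<Sum>m\<in>UNIV. \<Sum>G\<in>forests W k. sg_weight W G * (W $ i $ m * (x G m - x G i)))"
    by (rule sum.cong) (simp_all add: diff sum_distrib_left mult_ac)
  also have "\<dots> = (\<Sum>G\<in>forests W k. sg_weight W G * \<psi> G)"
    by (subst sum.swap) (simp add: \<psi>_def sum_distrib_left)
  also have "\<dots> = (\<Sum>G\<in>{G\<in>forests W k. i \<notin> Domain G}. sg_weight W G * \<psi> G) +
      (\<Sum>G\<in>{G\<in>forests W k. i \<in> Domain G}. sg_weight W G * \<psi> G)"
    by (subst sum.union_disjoint[symmetric]) (auto intro: sum.cong)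
  also have "(\<Sum>G\<in>{G\<in>forests W k. i \<in> Domain G}. sg_weight W G * \<psi> G) = 0"
    unfolding \<psi>_def x_def by (rule sum_forests_not_root_row_differences_eq_0)
  also have "(\<Sum>G\<in>{G\<in>forests W k. i \<notin> Domain G}. sg_weight W G * \<psi> G) =
      (\<Sum>G\<in>{G\<in>forests W k. i \<notin> Domain G}. sg_weight W G *
        (\<Sum>p\<in>attachable W G i. W $ i $ p * (x G p - of_bool (i = j))))"
  proof (rule sum.cong[OF refl])
    fix G assume "G \<in> {G\<in>forests W k. i \<notin> Domain G}"
    then have "rooted_forest G" "i \<notin> Domain G" by (auto simp: forests_def)
    then have "x G i = of_bool (i = j)" by (simp add: x_def forest_root_sink)
    then have "\<psi> G = (\<Sum>m\<in>UNIV. W $ i $ m * (x G m - of_bool (i = j)))" by (simp add: \<psi>_def)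
    also have "\<dots> = (\<Sum>p\<in>attachable W G i. W $ i $ p * (x G p - of_bool (i = j)))"
      by (rule sum_row_restrict_attachable) (simp add: x_def)
    finally show "sg_weight W G * \<psi> G = sg_weight W G *
        (\<Sum>p\<in>attachable W G i. W $ i $ p * (x G p - of_bool (i = j)))" by simp
  qed
  finally show ?thesis by (simp add: Qmat_Suc_minus_sigma x_def)
qed

lemma neg_laplacian_row_sum:
  fixes W :: "real^'n^'n"
  shows "(\<Sum>m\<in>UNIV. (- laplacian W) $ i $ m * q m) = (\<Sum>m\<in>UNIV. W $ i $ m * (q m - q i))"
proof -
  have off_diag: "(\<Sum>m\<in>UNIV - {i}. (- laplacian W) $ i $ m * q m) = (\<Sum>m\<in>UNIV - {i}. W $ i $ m * q m)"
    by (rule sum.cong) (auto simp: laplacian_def)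
  have "(\<Sum>m\<in>UNIV. (- laplacian W) $ i $ m * q m) =
      (- laplacian W) $ i $ i * q i + (\<Sum>m\<in>UNIV - {i}. (- laplacian W) $ i $ m * q m)"
    using sum.remove[of UNIV i "\<lambda>m. (- laplacian W) $ i $ m * q m"] by simp
  also have "\<dots> = (\<Sum>m\<in>UNIV - {i}. W $ i $ m * (q m - q i))"
    unfolding off_diag by (simp add: laplacian_def right_diff_distrib sum_subtractf sum_distrib_right)
  also have "\<dots> = (\<Sum>m\<in>UNIV. W $ i $ m * (q m - q i))"
    using sum.remove[of UNIV i "\<lambda>m. W $ i $ m * (q m - q i)"] by simp
  finally show ?thesis .
qed

lemma Qmat_Suc: "Qmat W (Suc k) = (- laplacian W) ** Qmat W k + sigma W (Suc k) *\<^sub>R mat 1"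
proof -
  have "((- laplacian W) ** Qmat W k + sigma W (Suc k) *\<^sub>R mat 1) $ i $ j =
      (\<Sum>m\<in>UNIV. (- laplacian W) $ i $ m * Qmat W k $ m $ j) + of_bool (i = j) * sigma W (Suc k)"
    for i j
    by (simp add: matrix_matrix_mult_def mat_def)
  also have "\<dots> i j = Qmat W (Suc k) $ i $ j" for i j
    unfolding neg_laplacian_row_sum Qmat_Suc_entry[symmetric] by simp
  finally show ?thesis by (simp add: vec_eq_iff)
qed

lemma trace_Qmat: "trace (Qmat W k) = (real CARD('n) - real k) * sigma W k"
  for W :: "real^'n^'n"
proof -
  have "trace (Qmat W k) = (\<Sum>F\<in>forests W k. \<Sum>v\<in>UNIV. of_bool (forest_root F v = v) * sg_weight W F)"
    unfolding trace_def Qmat_eq_sum_forests by (rule sum.swap)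
  also have "\<dots> = (\<Sum>F\<in>forests W k. (real CARD('n) - real k) * sg_weight W F)"
  proof (rule sum.cong[OF refl])
    fix F assume "F \<in> forests W k"
    then have "real (card {v. forest_root F v = v}) = real CARD('n) - real k"
      using card_forest_roots[of F] by (simp add: forests_def)
    then show "(\<Sum>v\<in>UNIV. of_bool (forest_root F v = v) * sg_weight W F) =
        (real CARD('n) - real k) * sg_weight W F"
      by (simp add: sum_distrib_right[symmetric] sum.If_cases)
  qed
  finally show ?thesis by (simp add: sigma_eq_sum_forests sum_distrib_left)
qed

theorem proposition4:
  fixes W :: "real^'n^'n"
  assumes n_gt1: "CARD('n) > 1"
    and no_loops: "\<And>i. W $ i $ i = 0"
    and nonneg: "\<And>i j. W $ i $ j \<ge> 0"
  shows "Qmat W (k+1) = (- laplacian W) ** Qmat W k + sigma W (k+1) *\<^sub>R mat 1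
       \<and> sigma W (k+1) = trace (laplacian W ** Qmat W k) / real (k+1)"
proof
  show "Qmat W (k+1) = (- laplacian W) ** Qmat W k + sigma W (k+1) *\<^sub>R mat 1"
    using Qmat_Suc by simp
  have "trace (laplacian W ** Qmat W k) = - trace ((- laplacian W) ** Qmat W k)"
    by (simp add: trace_def matrix_matrix_mult_def sum_negf)
  also have "\<dots> = real CARD('n) * sigma W (k+1) - trace (Qmat W (k+1))"
    by (simp add: Qmat_Suc trace_def mat_def sum.distrib)
  also have "\<dots> = real (k+1) * sigma W (k+1)"
    by (simp add: trace_Qmat algebra_simps)
  finally show "sigma W (k+1) = trace (laplacian W ** Qmat W k) / real (k+1)"
    by simp
qed

end
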